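(* Let $\bar{\mathcal{G}}=(\bar{\mathcal{V}},\bar{\mathcal{E}})$ be the edge localization graph of the communication graph $\mathcal{G}$ (as defined in the context), and let $L(\bar{\mathcal{G}})$ be its directed line graph. Then for every edge $e\in\bar{\mathcal{E}}$, \[ \kappa\bigl(L(\bar{\mathcal{G}}),e\bigr)\;\ge\;\kappa\bigl(\bar{\mathcal{G}},t(e)\bigr). \]
   Context: Setting. There are $N$ agents $\mathcal{V}=\{1,\dots,N\}$ in the plane. A set $\mathcal{S}$ of subtended angle measurements is given: an element $\alpha^{u}_{wv}\in\mathcal{S}$ (with $u,v,w$ distinct agents) is the counterclockwise angle in $[-\pi,\pi)$ measured at agent $u$ from the direction of agent $v$ to the direction of agent $w$; $\alpha^{u}_{wv}\in\mathcal{S}$ if and only if $\alpha^{u}_{vw}=-\alpha^{u}_{wv}\in\mathcal{S}$. The communication graph $\mathcal{G}=(\mathcal{V},\mathcal{E})$ is the directed graph whose edges are exactly the ordered pairs $(u,v),(v,u),(u,w),(w,u)$ for all $\alpha^{u}_{wv}\in\mathcal{S}$; it is symmetric and is assumed connected. Edge localization graph. For each edge $(u,v)\in\mathcal{E}$ such that there is no $w$ with $\alpha^{v}_{wu}\in\mathcal{S}$, introduce a new virtual vertex $\bar v^{u}$ (distinct for distinct such pairs $(u,v)$; it is co-located with agent $v$). Let $\mathcal{E}^{u}=\{(u,\bar v^{u}),(\bar v^{u},u) : (u,v)\in\mathcal{E},\ \nexists w \text{ with } \alpha^{v}_{wu}\in\mathcal{S}\}$ and $\mathcal{V}^{u}$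 the set of all these virtual vertices. Then $\bar{\mathcal{V}}=\bigl(\mathcal{V}\setminus\{u\in\mathcal{V}: \text{no } \alpha^{u}_{wv}\in\mathcal{S} \text{ for any } v,w\}\bigr)\cup\mathcal{V}^{u}$ and $\bar{\mathcal{E}}=\bigl(\mathcal{E}\setminus\{(u,v),(v,u): (u,v)\in\mathcal{E},\ \nexists w \text{ with }\alpha^{v}_{wu}\in\mathcal{S}\}\bigr)\cup\mathcal{E}^{u}$. For a directed edge $e=(u,v)$, $t(e)=u$ is its tail and $h(e)=v$ its head. The directed line graph $L(\mathcal{H})$ of a directed graph $\mathcal{H}=(V,E)$ has vertex set $E$ and a directed edge $(e_1,e_2)$ for every pair $e_1,e_2\in E$ with $h(e_1)=t(e_2)$. An oriented spanning tree of a directed graph with root $r$ is an acyclic subgraph containing all vertices in which every vertex other than $r$ has a directed path to $r$. $\kappa(\mathcal{H},r)$ denotes the number of oriented spanning trees of $\mathcal{H}$ rooted at $r$. *)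

theory Defs
  imports Main
begin

text \<open>A triple (u, w, v) in S encodes the measurement alpha^u_{wv}: measured at u,
  from the direction of v to the direction of w.\<close>

definition angle_set_ok :: "'a set \<Rightarrow> ('a \<times> 'a \<times> 'a) set \<Rightarrow> bool" where
  "angle_set_ok V S \<longleftrightarrow>
     (\<forall>(u, w, v) \<in> S. u \<in> V \<and> v \<in> V \<and> w \<in> V \<and> u \<noteq> v \<and> u \<noteq> w \<and> v \<noteq> w) \<and>
     (\<forall>u w v. (u, w, v) \<in> S \<longleftrightarrow> (u, v, w) \<in> S)"

definition comm_edges :: "('a \<times> 'a \<times> 'a) set \<Rightarrow> ('a \<times> 'a) set" where
  "comm_edges S = {e. \<exists>u w v. (u, w, v) \<in> S \<and> e \<in> {(u, v), (v, u), (u, w), (w, u)}}"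

definition measures_wrt :: "('a \<times> 'a \<times> 'a) set \<Rightarrow> 'a \<Rightarrow> 'a \<Rightarrow> bool" where
  "measures_wrt S v u \<longleftrightarrow> (\<exists>w. (v, w, u) \<in> S)"

definition measuring :: "('a \<times> 'a \<times> 'a) set \<Rightarrow> 'a \<Rightarrow> bool" where
  "measuring S u \<longleftrightarrow> (\<exists>v w. (u, w, v) \<in> S)"

text \<open>Vertices of the edge localization graph: Inl u is agent u; Inr (u, v) is the
  virtual vertex bar v^u (co-located with agent v), introduced for edge (u, v).\<close>

definition unmeasured_edges :: "('a \<times> 'a \<times> 'a) set \<Rightarrow> ('a \<times> 'a) set" where
  "unmeasured_edges S = {(u, v). (u, v) \<in> comm_edges S \<and> \<not> measures_wrt S v u}"

definition virt_vertices :: "('a \<times> 'a \<times> 'a) set \<Rightarrow> ('a + 'a \<times> 'a) set" where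
  "virt_vertices S = Inr ` unmeasured_edges S"

definition virt_edges :: "('a \<times> 'a \<times> 'a) set \<Rightarrow> (('a + 'a \<times> 'a) \<times> ('a + 'a \<times> 'a)) set" where
  "virt_edges S = (\<Union>(u, v) \<in> unmeasured_edges S. {(Inl u, Inr (u, v)), (Inr (u, v), Inl u)})"

definition loc_vertices :: "'a set \<Rightarrow> ('a \<times> 'a \<times> 'a) set \<Rightarrow> ('a + 'a \<times> 'a) set" where
  "loc_vertices V S = Inl ` {u \<in> V. measuring S u} \<union> virt_vertices S"

definition loc_edges :: "('a \<times> 'a \<times> 'a) set \<Rightarrow> (('a + 'a \<times> 'a) \<times> ('a + 'a \<times> 'a)) set" where
  "loc_edges S =
     map_prod Inl Inl ` (comm_edges S - (\<Union>(u, v) \<in> unmeasured_edges S. {(u, v), (v, u)}))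
     \<union> virt_edges S"

definition line_graph_edges :: "('b \<times> 'b) set \<Rightarrow> (('b \<times> 'b) \<times> ('b \<times> 'b)) set" where
  "line_graph_edges E = {(e1, e2). e1 \<in> E \<and> e2 \<in> E \<and> snd e1 = fst e2}"

definition oriented_spanning_tree :: "'b set \<Rightarrow> ('b \<times> 'b) set \<Rightarrow> 'b \<Rightarrow> ('b \<times> 'b) set \<Rightarrow> bool" where
  "oriented_spanning_tree V E r T \<longleftrightarrow>
     r \<in> V \<and> T \<subseteq> E \<and> T \<subseteq> V \<times> V \<and> acyclic T \<and>
     (\<forall>v \<in> V. (v, r) \<in> T\<^sup>*) \<and>
     (\<forall>e \<in> T. fst e \<noteq> r) \<and>
     (\<forall>v \<in> V - {r}. card {e \<in> T. fst e = v} = 1)"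

definition kappa :: "'b set \<Rightarrow> ('b \<times> 'b) set \<Rightarrow> 'b \<Rightarrow> nat" where
  "kappa V E r = card {T. oriented_spanning_tree V E r T}"

end

theory Submission
  imports Defs
begin

text \<open>A spanning tree \<open>T\<close> of a graph \<open>(V, E)\<close> rooted at the tail of an edge \<open>e\<close> lifts to a
  spanning tree of the line graph rooted at \<open>e\<close>: every edge \<open>f \<noteq> e\<close> points to \<open>e\<close> if its head
  is the root, and otherwise to the edge of \<open>T\<close> leaving its head. When \<open>E\<close> is symmetric,
  every non-root vertex \<open>x\<close> is the head of an edge other than \<open>e\<close>, unless \<open>e\<close> is the
  reverse of the tree edge leaving \<open>x\<close>; either way the tree edge leaving \<open>x\<close> can be read off
  the lift, so lifting is injective.\<close>

lemma acyclic_single_valued_sink: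
  assumes sv: "single_valued R"
    and sink: "\<And>y. (r, y) \<notin> R"
    and reach: "\<And>x. x \<in> Domain R \<Longrightarrow> (x, r) \<in> R\<^sup>*"
  shows "acyclic R"
proof -
  have no_cycle: "(v, v) \<notin> R\<^sup>+" if "(v, r) \<in> R\<^sup>*" for v
    using that
  proof (induction v rule: converse_rtrancl_induct)
    case base
    show ?case using sink by (metis tranclD)
  next
    case (step v w)
    show ?case
    proof
      assume "(v, v) \<in> R\<^sup>+"
      then obtain w' where "(v, w') \<in> R" "(w', v) \<in> R\<^sup>*" by (metis tranclD)
      with sv step.hyps have "(w, v) \<in> R\<^sup>*" by (metis single_valuedD)
      with step.hyps have "(w, w) \<in> R\<^sup>+" by (meson rtrancl_into_trancl1)
      with step.IH show False by simp
    qed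
  qed
  show ?thesis
    unfolding acyclic_def
    using no_cycle reach by (metis DomainI tranclD)
qed

lemma oriented_spanning_tree_out_edge:
  assumes "oriented_spanning_tree V E r T" "v \<in> V" "v \<noteq> r"
  obtains w where "(v, w) \<in> T" "\<And>z. (v, z) \<in> T \<Longrightarrow> z = w"
proof -
  from assms have "card {g \<in> T. fst g = v} = 1"
    unfolding oriented_spanning_tree_def by blast
  then obtain g where g: "{g' \<in> T. fst g' = v} = {g}" by (meson card_1_singletonE)
  then have "g \<in> T" "fst g = v" and unique: "\<And>g'. g' \<in> T \<Longrightarrow> fst g' = v \<Longrightarrow> g' = g"
    by blast+
  show thesis
  proof (rule that)
    show "(v, snd g) \<in> T" using \<open>g \<in> T\<close> \<open>fst g = v\<close> by (metis prod.collapse)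
  next
    fix z assume "(v, z) \<in> T"
    then show "z = snd g" using unique by fastforce
  qed
qed

definition line_tree :: "('b \<times> 'b) set \<Rightarrow> 'b \<times> 'b \<Rightarrow> ('b \<times> 'b) set \<Rightarrow> (('b \<times> 'b) \<times> ('b \<times> 'b)) set"
  where "line_tree E e T =
    {(f, g). f \<in> E - {e} \<and> (if snd f = fst e then g = e else g \<in> T \<and> fst g = snd f)}"

lemma line_tree_reaches_root:
  assumes T: "oriented_spanning_tree V E (fst e) T" and "E \<subseteq> V \<times> V" and "f \<in> E"
  shows "(f, e) \<in> (line_tree E e T)\<^sup>*"
proof -
  have "\<forall>f \<in> E - {e}. snd f = x \<longrightarrow> (f, e) \<in> (line_tree E e T)\<^sup>*" if "(x, fst e) \<in> T\<^sup>*" for x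
    using that
  proof (induction x rule: converse_rtrancl_induct)
    case base
    show ?case by (auto simp: line_tree_def)
  next
    case (step x y)
    from T have "T \<subseteq> E" "\<forall>g \<in> T. fst g \<noteq> fst e"
      unfolding oriented_spanning_tree_def by blast+
    with step.hyps(1) have "x \<noteq> fst e" "(x, y) \<in> E - {e}" by auto
    show ?case
    proof (intro ballI impI)
      fix f assume "f \<in> E - {e}" "snd f = x"
      with step.hyps(1) \<open>x \<noteq> fst e\<close> have "(f, (x, y)) \<in> line_tree E e T"
        by (simp add: line_tree_def)
      moreover have "((x, y), e) \<in> (line_tree E e T)\<^sup>*"
        using step.IH \<open>(x, y) \<in> E - {e}\<close> by simp
      ultimately show "(f, e) \<in> (line_tree E e T)\<^sup>*"
        by (rule converse_rtrancl_into_rtrancl)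
    qed
  qed
  moreover have "(snd f, fst e) \<in> T\<^sup>*"
  proof -
    have "snd f \<in> V" using assms(2,3) by auto
    with T show ?thesis unfolding oriented_spanning_tree_def by blast
  qed
  ultimately show ?thesis using \<open>f \<in> E\<close> by (cases "f = e") simp_all
qed

lemma line_tree_out_edge:
  assumes T: "oriented_spanning_tree V E (fst e) T" and "E \<subseteq> V \<times> V" and f: "f \<in> E - {e}"
  obtains g where "(f, g) \<in> line_tree E e T" "\<And>g'. (f, g') \<in> line_tree E e T \<Longrightarrow> g' = g"
proof (cases "snd f = fst e")
  case True
  show thesis
    by (rule that[of e]) (use f True in \<open>simp_all add: line_tree_def\<close>)
next
  case False
  have "snd f \<in> V" using assms(2) f by auto
  obtain w where w: "(snd f, w) \<in> T" and w_unique: "\<And>z. (snd f, z) \<in> T \<Longrightarrow> z = w"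
    using oriented_spanning_tree_out_edge[OF T \<open>snd f \<in> V\<close> False] by metis
  show thesis
  proof (rule that[of "(snd f, w)"])
    show "(f, (snd f, w)) \<in> line_tree E e T" using f False w by (simp add: line_tree_def)
  next
    fix g' assume "(f, g') \<in> line_tree E e T"
    then have "g' \<in> T" "fst g' = snd f" using False by (simp_all add: line_tree_def)
    then show "g' = (snd f, w)" using w_unique by (metis prod.collapse)
  qed
qed

lemma oriented_spanning_tree_line_tree:
  assumes sub: "E \<subseteq> V \<times> V" and e: "e \<in> E"
    and T: "oriented_spanning_tree V E (fst e) T"
  shows "oriented_spanning_tree E (line_graph_edges E) e (line_tree E e T)"
proof -
  let ?L = "line_tree E e T"
  have dom: "f \<in> E - {e}" if "(f, g) \<in> ?L" for f g
    using that by (simp add: line_tree_def)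
  have reach: "(f, e) \<in> ?L\<^sup>*" if "f \<in> E" for f
    using line_tree_reaches_root[OF T sub that] .
  have out: "card {p \<in> ?L. fst p = f} = 1" if f: "f \<in> E - {e}" for f
  proof -
    obtain g where g: "(f, g) \<in> ?L" and unique: "\<And>g'. (f, g') \<in> ?L \<Longrightarrow> g' = g"
      using line_tree_out_edge[OF T sub f] by metis
    have "{p \<in> ?L. fst p = f} = {(f, g)}"
    proof (intro equalityI subsetI)
      fix p assume "p \<in> {p \<in> ?L. fst p = f}"
      then show "p \<in> {(f, g)}" using unique by (metis (lifting) mem_Collect_eq prod.collapse singletonI)
    qed (use g in simp)
    then show ?thesis by simp
  qed
  have "single_valued ?L"
  proof (rule single_valuedI)
    fix f g g' assume fg: "(f, g) \<in> ?L" "(f, g') \<in> ?L"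
    obtain h where "\<And>g''. (f, g'') \<in> ?L \<Longrightarrow> g'' = h"
      using line_tree_out_edge[OF T sub dom[OF fg(1)]] by metis
    with fg show "g = g'" by metis
  qed
  moreover have "(e, g) \<notin> ?L" for g by (simp add: line_tree_def)
  moreover have "(f, e) \<in> ?L\<^sup>*" if "f \<in> Domain ?L" for f
    using that dom reach by blast
  ultimately have "acyclic ?L" by (rule acyclic_single_valued_sink)
  moreover have "T \<subseteq> E" using T unfolding oriented_spanning_tree_def by blast
  then have "?L \<subseteq> line_graph_edges E" "?L \<subseteq> E \<times> E"
    using e by (auto simp: line_tree_def line_graph_edges_def)
  moreover have "\<forall>p \<in> ?L. fst p \<noteq> e" using dom by fastforce
  ultimately show ?thesis
    unfolding oriented_spanning_tree_def using e reach out by blast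
qed

lemma line_tree_determines_tree:
  assumes sym: "sym E"
    and T1: "oriented_spanning_tree V E (fst e) T1"
    and T2: "oriented_spanning_tree V E (fst e) T2"
    and eq: "line_tree E e T1 = line_tree E e T2"
  shows "T1 \<subseteq> T2"
proof
  fix g assume g: "g \<in> T1"
  obtain x y where gxy: "g = (x, y)" by fastforce
  from T1 g gxy have "(x, y) \<in> E" "x \<in> V" "x \<noteq> fst e"
    unfolding oriented_spanning_tree_def by auto
  show "g \<in> T2"
  proof (cases "\<exists>f \<in> E - {e}. snd f = x")
    case True
    then obtain f where f: "f \<in> E - {e}" "snd f = x" by blast
    with g gxy \<open>x \<noteq> fst e\<close> have "(f, g) \<in> line_tree E e T1"
      by (simp add: line_tree_def)
    with f \<open>x \<noteq> fst e\<close> show ?thesis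
      unfolding eq by (simp add: line_tree_def)
  next
    case False
    have "(y, x) \<in> E" using sym \<open>(x, y) \<in> E\<close> by (rule symD)
    with False have "e = (y, x)" by force
    from T2 \<open>x \<in> V\<close> \<open>x \<noteq> fst e\<close> obtain z where "(x, z) \<in> T2"
      by (rule oriented_spanning_tree_out_edge)
    then have "(x, z) \<in> E" using T2 unfolding oriented_spanning_tree_def by blast
    then have "(z, x) \<in> E" using sym by (rule symD[rotated])
    with False have "e = (z, x)" by force
    with \<open>(x, z) \<in> T2\<close> gxy \<open>e = (y, x)\<close> show ?thesis by auto
  qed
qed

lemma kappa_le_kappa_line_graph:
  assumes "finite E" "sym E" "E \<subseteq> V \<times> V" "e \<in> E"
  shows "kappa V E (fst e) \<le> kappa E (line_graph_edges E) e"
  unfolding kappa_def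
proof (rule card_inj_on_le[where f = "line_tree E e"])
  show "inj_on (line_tree E e) {T. oriented_spanning_tree V E (fst e) T}"
    using line_tree_determines_tree[OF \<open>sym E\<close>] by (intro inj_onI) (simp add: subset_antisym)
  show "line_tree E e ` {T. oriented_spanning_tree V E (fst e) T}
        \<subseteq> {T. oriented_spanning_tree E (line_graph_edges E) e T}"
    using oriented_spanning_tree_line_tree assms(3,4) by blast
  have "{T. oriented_spanning_tree E (line_graph_edges E) e T} \<subseteq> Pow (E \<times> E)"
    unfolding oriented_spanning_tree_def by auto
  then show "finite {T. oriented_spanning_tree E (line_graph_edges E) e T}"
    by (rule finite_subset) (simp add: \<open>finite E\<close>)
qed

lemma comm_edges_sym: "sym (comm_edges S)"
  unfolding comm_edges_def by (intro symI) blast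

lemma comm_edges_subset: "angle_set_ok V S \<Longrightarrow> comm_edges S \<subseteq> V \<times> V"
  unfolding comm_edges_def angle_set_ok_def by fastforce

lemma unmeasured_edge_measuring_tail:
  assumes ok: "angle_set_ok V S" and uv: "(u, v) \<in> unmeasured_edges S"
  shows "measuring S u"
proof -
  from uv obtain a w b where "(a, w, b) \<in> S" "(u, v) \<in> {(a, b), (b, a), (a, w), (w, a)}"
    and "\<not> measures_wrt S v u"
    unfolding unmeasured_edges_def comm_edges_def by blast
  moreover from this ok have "(a, b, w) \<in> S" unfolding angle_set_ok_def by blast
  ultimately show ?thesis unfolding measuring_def measures_wrt_def by auto
qed

lemma loc_edges_sym: "sym (loc_edges S)"
  using comm_edges_sym[of S]
  unfolding loc_edges_def virt_edges_def by (intro symI) (auto dest: symD)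

lemma loc_edges_subset:
  assumes ok: "angle_set_ok V S"
  shows "loc_edges S \<subseteq> loc_vertices V S \<times> loc_vertices V S"
proof
  fix p assume p: "p \<in> loc_edges S"
  show "p \<in> loc_vertices V S \<times> loc_vertices V S"
  proof (cases "p \<in> virt_edges S")
    case True
    then obtain u v where uv: "(u, v) \<in> unmeasured_edges S"
      and "p = (Inl u, Inr (u, v)) \<or> p = (Inr (u, v), Inl u)"
      unfolding virt_edges_def by blast
    moreover have "measuring S u" using unmeasured_edge_measuring_tail[OF ok uv] .
    moreover have "u \<in> V" using uv comm_edges_subset[OF ok] unfolding unmeasured_edges_def by auto
    ultimately show ?thesis unfolding loc_vertices_def virt_vertices_def by auto
  next
    case False
    then obtain u v where p: "p = (Inl u, Inl v)" and uv: "(u, v) \<in> comm_edges S"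
      and "(u, v) \<notin> unmeasured_edges S" "(v, u) \<notin> unmeasured_edges S"
      using p unfolding loc_edges_def by blast
    moreover have "(v, u) \<in> comm_edges S" using comm_edges_sym uv by (rule symD)
    ultimately have "measures_wrt S v u" "measures_wrt S u v"
      unfolding unmeasured_edges_def by auto
    then have "measuring S u" "measuring S v"
      unfolding measures_wrt_def measuring_def by auto
    moreover have "u \<in> V" "v \<in> V" using uv comm_edges_subset[OF ok] by auto
    ultimately show ?thesis using p unfolding loc_vertices_def by auto
  qed
qed

lemma finite_loc_edges:
  assumes "finite V" and ok: "angle_set_ok V S"
  shows "finite (loc_edges S)"
proof -
  have "loc_vertices V S \<subseteq> Inl ` V \<union> Inr ` (V \<times> V)"
    using comm_edges_subset[OF ok]
    unfolding loc_vertices_def virt_vertices_def unmeasured_edges_def by auto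
  then have "finite (loc_vertices V S)"
    by (rule finite_subset) (simp add: \<open>finite V\<close>)
  then show ?thesis
    using loc_edges_subset[OF ok] by (meson finite_SigmaI finite_subset)
qed

theorem corollary1:
  fixes V :: "'a set" and S :: "('a \<times> 'a \<times> 'a) set"
  assumes "finite V"
    and "angle_set_ok V S"
    and "\<forall>u \<in> V. \<forall>v \<in> V. (u, v) \<in> (comm_edges S)\<^sup>*"
    and "e \<in> loc_edges S"
  shows "kappa (loc_edges S) (line_graph_edges (loc_edges S)) e
           \<ge> kappa (loc_vertices V S) (loc_edges S) (fst e)"
  using kappa_le_kappa_line_graph[OF finite_loc_edges[OF assms(1,2)] loc_edges_sym
      loc_edges_subset[OF assms(2)] assms(4)]
  by simp

end
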